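(* ($q$-Seidel formula) Let $q\neq-1$ be real and $n\ge1$. Then $$\sum_{k=0}^{\lfloor n/2\rfloor}q^{\binom{2k}{2}}\begin{bmatrix} n\\ 2k\end{bmatrix}(-1)^k\frac{(-q^{n-2k+1};q)_{2k}}{(-q^{2n-2k};q)_{2k}}\,G_{2n-2k}(q)=[n=1].$$
   Context: Notation: $[m]=1+q+\cdots+q^{m-1}$, $[m]!=[1]\cdots[m]$, $\begin{bmatrix} m\\ j\end{bmatrix}=\frac{[m]!}{[j]![m-j]!}$; $(a;q)_m=(1-a)(1-aq)\cdots(1-aq^{m-1})$ (so $(-a;q)_m=(1+a)(1+aq)\cdots(1+aq^{m-1})$, and $(a;q)_0=1$); $[P]$ is $1$ if $P$ holds and $0$ otherwise. With $e(z)=\sum_{m\ge0}z^m/[m]!$, the $q$-Genocchi numbers $G_{2m}(q)$, $m\ge1$, are defined by the formal power series identity $z\frac{e(z)-e(-z)}{e(z)+e(-z)}=\sum_{m\ge1}\frac{(-1)^{m-1}G_{2m}(q)(-q;q)_{2m-1}}{[2m]!}z^{2m}$. *)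

theory Defs
  imports "HOL-Computational_Algebra.Formal_Power_Series"
begin

definition qint :: "real \<Rightarrow> nat \<Rightarrow> real" where
  "qint q m = (\<Sum>i<m. q ^ i)"

definition qfact :: "real \<Rightarrow> nat \<Rightarrow> real" where
  "qfact q m = (\<Prod>i\<in>{1..m}. qint q i)"

definition qbinom :: "real \<Rightarrow> nat \<Rightarrow> nat \<Rightarrow> real" where
  "qbinom q m j = qfact q m / (qfact q j * qfact q (m - j))"

definition qpoch :: "real \<Rightarrow> real \<Rightarrow> nat \<Rightarrow> real" where
  "qpoch a q m = (\<Prod>i<m. 1 - a * q ^ i)"

definition qexp :: "real \<Rightarrow> real fps" where
  "qexp q = Abs_fps (\<lambda>m. 1 / qfact q m)"

definition qexp_neg :: "real \<Rightarrow> real fps" where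
  "qexp_neg q = Abs_fps (\<lambda>m. (-1) ^ m / qfact q m)"

definition qgen_series :: "real \<Rightarrow> real fps" where
  "qgen_series q = fps_X * (qexp q - qexp_neg q) / (qexp q + qexp_neg q)"

text \<open>q-Genocchi number: qGenocchi q m = G_{2m}(q), m \<ge> 1, determined by
  comparing the coefficient of z^(2m) in the defining identity
  z (e(z)-e(-z))/(e(z)+e(-z)) = sum_m (-1)^(m-1) G_{2m}(q) (-q;q)_{2m-1} z^(2m)/[2m]!.\<close>
definition qGenocchi :: "real \<Rightarrow> nat \<Rightarrow> real" where
  "qGenocchi q m =
     fps_nth (qgen_series q) (2 * m) * qfact q (2 * m) * (-1) ^ (m - 1)
       / qpoch (- q) q (2 * m - 1)"

end

theory Submission
  imports Defs "HOL-Computational_Algebra.Polynomial"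
begin

text \<open>
  Let u(l) be [l]! times the coefficient of z^l in z (e(z) - e(-z)) / (e(z) + e(-z)) and let L be
  the linear functional x^l \<mapsto> u(l) on polynomials. With B p(x) = x p(x) + p(q x) one has
  B^m 1 = \<Sum>l. [m choose l] x^l, and multiplying the generating function by e(z) + e(-z) gives
  L(B^m 1) = [m] for even m. Hence for the linear map E : x^m \<mapsto> B^m 1, the composite L \<circ> E
  agrees with \<Lambda> : x^m \<mapsto> [m] on even polynomials.

  E maps \<Prod>k<n. (x - q^k) to x^n, so the coefficients of E(Q n), where
  Q n = \<Prod>k<n. (x^2 - q^(2k)) = \<Prod>k<n. (x - q^k)(x + q^k), can be computed one factor x + q^k at a
  time; the left-hand side of the formula is (-1)^(n-1) / (-q;q)_(2n-1) times L(E(Q n)) = \<Lambda>(Q n).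
  Finally \<Lambda>(x^2 f) = q^2 \<Lambda>(f) + (1 + q) f(1) and (Q n)(1) = 0 give \<Lambda>(Q n) = [n = 1] (1 + q).
\<close>

unbundle fps_syntax

lemma qint_0 [simp]: "qint q 0 = 0"
  by (simp add: qint_def)

lemma qint_Suc: "qint q (Suc m) = qint q m + q ^ m"
  by (simp add: qint_def)

lemma qint_add: "qint q (j + m) = qint q j + q ^ j * qint q m"
  by (induction m) (simp_all add: qint_Suc algebra_simps power_add)

lemma qfact_0 [simp]: "qfact q 0 = 1"
  by (simp add: qfact_def)

lemma qfact_Suc: "qfact q (Suc m) = qfact q m * qint q (Suc m)"
  by (simp add: qfact_def atLeastAtMostSuc_conv mult.commute)

lemma real_power_eq_1_imp: "(q::real) ^ m = 1 \<Longrightarrow> m > 0 \<Longrightarrow> q = 1 \<or> q = -1"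
  using power_eq_1_iff[of q m] by (auto simp: abs_if split: if_splits)

lemma one_plus_power_nonzero: "q \<noteq> -1 \<Longrightarrow> 1 + (q::real) ^ e \<noteq> 0"
proof
  assume "q \<noteq> -1" and "1 + q ^ e = 0"
  then have "q ^ e = -1" by simp
  then have "q ^ (e * 2) = 1" and "e > 0"
    by (simp add: power_mult, cases e, simp_all)
  then show False
    using real_power_eq_1_imp \<open>q \<noteq> -1\<close> \<open>q ^ e = -1\<close> by force
qed

lemma qint_nonzero:
  assumes "q \<noteq> -1" and "m > 0"
  shows "qint q m \<noteq> 0"
proof (cases "q = 1")
  case True
  then show ?thesis using assms by (simp add: qint_def)
next
  case False
  have "qint q m * (1 - q) = 1 - q ^ m"
    unfolding qint_def by (simp add: one_diff_power_eq mult.commute)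
  moreover have "q ^ m \<noteq> 1"
    using real_power_eq_1_imp assms False by blast
  ultimately show ?thesis by auto
qed

lemma qfact_nonzero: "q \<noteq> -1 \<Longrightarrow> qfact q m \<noteq> 0"
  by (induction m) (auto simp: qfact_Suc qint_nonzero)

lemma qpoch_0 [simp]: "qpoch a q 0 = 1"
  by (simp add: qpoch_def)

lemma qpoch_Suc_left: "qpoch a q (Suc m) = (1 - a) * qpoch (a * q) q m"
  unfolding qpoch_def by (subst prod.lessThan_Suc_shift) (simp add: mult.assoc)

lemma qpoch_add: "qpoch a q (m + r) = qpoch a q m * qpoch (a * q ^ m) q r"
  by (induction r) (simp_all add: qpoch_def power_add mult_ac)

lemma qpoch_neg_power_nonzero: "q \<noteq> -1 \<Longrightarrow> qpoch (- (q ^ e)) q m \<noteq> 0"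
  unfolding qpoch_def using one_plus_power_nonzero[of q]
  by (simp add: prod_zero_iff power_add[symmetric])

text \<open>For \<open>j > n\<close> the truncated subtraction makes \<open>qbinom\<close> a nonzero junk value;
  \<open>qchoose\<close> replaces it by \<open>0\<close>, so that q-Pascal holds without side conditions.\<close>

definition qchoose :: "real \<Rightarrow> nat \<Rightarrow> nat \<Rightarrow> real" where
  "qchoose q n j = (if j \<le> n then qbinom q n j else 0)"

lemma qchoose_0_right [simp]: "q \<noteq> -1 \<Longrightarrow> qchoose q n 0 = 1"
  by (simp add: qchoose_def qbinom_def qfact_nonzero)

lemma qchoose_self [simp]: "q \<noteq> -1 \<Longrightarrow> qchoose q n n = 1"
  by (simp add: qchoose_def qbinom_def qfact_nonzero)

lemma qchoose_eq_0 [simp]: "n < j \<Longrightarrow> qchoose q n j = 0"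
  by (simp add: qchoose_def)

lemma qchoose_symmetric: "j \<le> n \<Longrightarrow> qchoose q n (n - j) = qbinom q n j"
  by (simp add: qchoose_def qbinom_def mult.commute)

lemma qchoose_Suc_Suc:
  assumes q: "q \<noteq> -1"
  shows "qchoose q (Suc n) (Suc j) = qchoose q n j + q ^ Suc j * qchoose q n (Suc j)"
proof (cases "Suc j \<le> n")
  case False
  then consider "j = n" | "n < j" by linarith
  then show ?thesis using q by cases simp_all
next
  case True
  then obtain e where n: "n = Suc j + e" using le_Suc_ex by blast
  note nz = qfact_nonzero[OF q]
  have fact_Suc_n: "qfact q (Suc n) = qfact q n * (qint q (Suc j) + q ^ Suc j * qint q (Suc e))"
    using qfact_Suc[of q n] qint_add[of q "Suc j" "Suc e"] n by simp
  have "Suc n - Suc j = Suc e" using n by simp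
  then have lhs: "qchoose q (Suc n) (Suc j) = qfact q (Suc n) / (qfact q (Suc j) * qfact q (Suc e))"
    using \<open>Suc j \<le> n\<close> by (simp add: qchoose_def qbinom_def)
  have "qchoose q n j + q ^ Suc j * qchoose q n (Suc j)
      = qfact q n / (qfact q j * qfact q (Suc e))
        + q ^ Suc j * (qfact q n / (qfact q (Suc j) * qfact q e))"
    by (simp add: qchoose_def qbinom_def n)
  also have "\<dots> = qfact q n * (qint q (Suc j) + q ^ Suc j * qint q (Suc e))
                    / (qfact q (Suc j) * qfact q (Suc e))"
    using nz[of j] nz[of e] qint_nonzero[OF q, of "Suc j"] qint_nonzero[OF q, of "Suc e"]
    by (simp add: qfact_Suc field_simps)
  finally show ?thesis by (simp add: lhs fact_Suc_n)
qed

section \<open>Linear functionals on polynomials\<close>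

definition lin_functional :: "(nat \<Rightarrow> 'a::comm_semiring_0) \<Rightarrow> 'a poly \<Rightarrow> 'a" where
  "lin_functional u p = (\<Sum>i\<le>degree p. coeff p i * u i)"

lemma sum_coeff_degree_le:
  fixes g :: "nat \<Rightarrow> 'a::zero \<Rightarrow> 'b::comm_monoid_add"
  assumes "degree p \<le> N" and "\<And>i. g i 0 = 0"
  shows "(\<Sum>i\<le>N. g i (coeff p i)) = (\<Sum>i\<le>degree p. g i (coeff p i))"
  by (rule sum.mono_neutral_right) (use assms in \<open>auto simp: coeff_eq_0\<close>)

lemma lin_functional_degree_le:
  "degree p \<le> N \<Longrightarrow> lin_functional u p = (\<Sum>i\<le>N. coeff p i * u i)"
  unfolding lin_functional_def by (rule sum_coeff_degree_le[symmetric]) auto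

lemma lin_functional_add: "lin_functional u (p + r) = lin_functional u p + lin_functional u r"
proof -
  define N where "N = max (degree p) (degree r)"
  have "degree (p + r) \<le> N" "degree p \<le> N" "degree r \<le> N"
    unfolding N_def by (auto intro: degree_add_le)
  then show ?thesis
    by (simp add: lin_functional_degree_le[of _ N] sum.distrib algebra_simps)
qed

lemma lin_functional_smult: "lin_functional u (smult c p) = c * lin_functional u p"
proof -
  have "degree (smult c p) \<le> degree p" by (rule degree_smult_le)
  then show ?thesis
    by (simp add: lin_functional_degree_le[of _ "degree p"] sum_distrib_left mult.assoc)
qed

lemma lin_functional_sum:
  "finite A \<Longrightarrow> lin_functional u (\<Sum>i\<in>A. p i) = (\<Sum>i\<in>A. lin_functional u (p i))"
  by (induction A rule: finite_induct) (simp_all add: lin_functional_add lin_functional_def[of _ 0])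

lemma lin_functional_pCons_0:
  "lin_functional u (pCons 0 p) = lin_functional (\<lambda>i. u (Suc i)) p"
proof -
  have "degree (pCons 0 p) \<le> Suc (degree p)"
    by (rule degree_pCons_le)
  then have "lin_functional u (pCons 0 p) = (\<Sum>i\<le>Suc (degree p). coeff (pCons 0 p) i * u i)"
    by (rule lin_functional_degree_le)
  also have "\<dots> = lin_functional (\<lambda>i. u (Suc i)) p"
    by (subst sum.atMost_Suc_shift) (simp add: lin_functional_def)
  finally show ?thesis .
qed

section \<open>The q-Pascal operator and the umbral map\<close>

text \<open>\<open>qpascal_op q p\<close> is \<open>x p(x) + p(q x)\<close>; its powers applied to \<open>1\<close> are the
  Gaussian analogues \<open>\<Sum>l. [i choose l] x\<^sup>l\<close> of \<open>(1 + x)\<^sup>i\<close>.\<close>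

definition qpascal_op :: "real \<Rightarrow> real poly \<Rightarrow> real poly" where
  "qpascal_op q p = pCons 0 p + pcompose p [:0, q:]"

lemma coeff_qpascal_op:
  "coeff (qpascal_op q p) i = (case i of 0 \<Rightarrow> 0 | Suc k \<Rightarrow> coeff p k) + q ^ i * coeff p i"
  by (simp add: qpascal_op_def coeff_pCons coeff_pcompose_linear)

lemma qpascal_op_smult: "qpascal_op q (smult c p) = smult c (qpascal_op q p)"
  by (rule poly_eqI) (simp add: coeff_qpascal_op algebra_simps split: nat.split)

lemma qpascal_op_sum: "qpascal_op q (\<Sum>i\<in>A. p i) = (\<Sum>i\<in>A. qpascal_op q (p i))"
  by (rule poly_eqI)
    (simp add: coeff_qpascal_op coeff_sum sum_distrib_left sum.distrib split: nat.split)

lemma coeff_qpascal_op_power: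
  "q \<noteq> -1 \<Longrightarrow> coeff ((qpascal_op q ^^ i) 1) l = qchoose q i l"
proof (induction i arbitrary: l)
  case 0
  then show ?case by (cases l) (auto simp: coeff_1)
next
  case (Suc i)
  then show ?case
    by (cases l) (simp_all add: coeff_qpascal_op qchoose_Suc_Suc)
qed

definition qumbral :: "real \<Rightarrow> real poly \<Rightarrow> real poly" where
  "qumbral q f = (\<Sum>i\<le>degree f. smult (coeff f i) ((qpascal_op q ^^ i) 1))"

lemma qumbral_degree_le:
  "degree f \<le> N \<Longrightarrow> qumbral q f = (\<Sum>i\<le>N. smult (coeff f i) ((qpascal_op q ^^ i) 1))"
  unfolding qumbral_def by (rule sum_coeff_degree_le[symmetric]) auto

lemma qumbral_add: "qumbral q (f + g) = qumbral q f + qumbral q g"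
proof -
  define N where "N = max (degree f) (degree g)"
  have "degree (f + g) \<le> N" "degree f \<le> N" "degree g \<le> N"
    unfolding N_def by (auto intro: degree_add_le)
  then show ?thesis
    by (simp add: qumbral_degree_le[of _ N] smult_add_left sum.distrib)
qed

lemma qumbral_smult: "qumbral q (smult c f) = smult c (qumbral q f)"
proof -
  have "degree (smult c f) \<le> degree f" by (rule degree_smult_le)
  then show ?thesis
    by (auto intro!: poly_eqI simp: qumbral_degree_le[of _ "degree f"] coeff_sum sum_distrib_left
        mult.assoc)
qed

lemma qumbral_pCons_0: "qumbral q (pCons 0 f) = qpascal_op q (qumbral q f)"
proof -
  have "degree (pCons 0 f) \<le> Suc (degree f)"
    by (rule degree_pCons_le)
  then have "qumbral q (pCons 0 f)
      = (\<Sum>i\<le>Suc (degree f). smult (coeff (pCons 0 f) i) ((qpascal_op q ^^ i) 1))"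
    by (rule qumbral_degree_le)
  also have "\<dots> = qpascal_op q (qumbral q f)"
    by (subst sum.atMost_Suc_shift) (simp add: qumbral_def qpascal_op_sum qpascal_op_smult)
  finally show ?thesis .
qed

lemma qumbral_mult_linear:
  "qumbral q (f * [:c, 1:]) = qpascal_op q (qumbral q f) + smult c (qumbral q f)"
proof -
  have "f * [:c, 1:] = smult c f + pCons 0 f"
    by (simp add: mult_pCons_right one_pCons[symmetric])
  then show ?thesis by (simp add: qumbral_add qumbral_smult qumbral_pCons_0)
qed

definition qfalling_poly :: "real \<Rightarrow> nat \<Rightarrow> real poly" where
  "qfalling_poly q n = (\<Prod>k<n. [:- (q ^ k), 1:])"

definition qrising_poly :: "real \<Rightarrow> nat \<Rightarrow> real poly" where
  "qrising_poly q n = (\<Prod>k<n. [:q ^ k, 1:])"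

lemma qumbral_qfalling_poly: "qumbral q (qfalling_poly q n) = monom 1 n"
proof (induction n)
  case 0
  then show ?case by (simp add: qfalling_poly_def qumbral_def one_pCons)
next
  case (Suc n)
  have "qfalling_poly q (Suc n) = qfalling_poly q n * [:- (q ^ n), 1:]"
    by (simp add: qfalling_poly_def)
  then have "qumbral q (qfalling_poly q (Suc n))
      = qpascal_op q (monom 1 n) + smult (- (q ^ n)) (monom 1 n)"
    by (simp only: qumbral_mult_linear Suc.IH)
  also have "\<dots> = monom 1 (Suc n)"
    by (rule poly_eqI) (auto simp: coeff_qpascal_op coeff_monom split: nat.split)
  finally show ?case .
qed

text \<open>Coefficient of \<open>x\<^sup>n\<^sup>+\<^sup>j\<close> in the umbral image of
  \<open>qfalling_poly q n * qrising_poly q i\<close>, for \<open>i \<le> n\<close>.\<close>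

definition umbral_coeff :: "real \<Rightarrow> nat \<Rightarrow> nat \<Rightarrow> nat \<Rightarrow> real" where
  "umbral_coeff q n i j =
     qchoose q i j * q ^ ((i - j) choose 2) * qpoch (- (q ^ (n + 1 - (i - j)))) q (i - j)"

lemma choose_2_Suc: "Suc e choose 2 = (e choose 2) + e"
  using binomial_Suc_Suc[of e 1] by (simp add: numeral_2_eq_2)

lemma umbral_coeff_Suc:
  assumes q: "q \<noteq> -1" and "i < n"
  shows "umbral_coeff q n (Suc i) j
       = (case j of 0 \<Rightarrow> 0 | Suc j' \<Rightarrow> umbral_coeff q n i j') + (q ^ (n + j) + q ^ i) * umbral_coeff q n i j"
proof (cases j)
  case 0
  have "Suc i choose 2 = (i choose 2) + i" by (rule choose_2_Suc)
  moreover have "q ^ (n - i) * q = q ^ (n + 1 - i)" and "q ^ i * (1 + q ^ (n - i)) = q ^ n + q ^ i"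
    using \<open>i < n\<close> by (simp_all add: algebra_simps power_add[symmetric] Suc_diff_le)
  ultimately show ?thesis
    using 0 q by (simp add: umbral_coeff_def qpoch_Suc_left power_add algebra_simps)
next
  case (Suc j')
  consider "i < j'" | "j' = i" | "j' < i" by linarith
  then show ?thesis
  proof cases
    case 1
    then show ?thesis using Suc by (simp add: umbral_coeff_def)
  next
    case 2
    then show ?thesis using Suc q by (simp add: umbral_coeff_def)
  next
    case 3
    then obtain e where i: "i = Suc j' + e" using le_Suc_ex less_eq_Suc_le by blast
    define P where "P = qpoch (- (q ^ (Suc n - e))) q e"
    have diffs: "Suc i - Suc j' = Suc e" "i - j' = Suc e" "i - Suc j' = e" "Suc n - Suc e = n - e"
      using i by simp_all
    have "Suc n - e = Suc (n - e)"
      using \<open>i < n\<close> i by simp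
    then have poch: "qpoch (- (q ^ (n - e))) q (Suc e) = (1 + q ^ (n - e)) * P"
      by (simp add: P_def qpoch_Suc_left mult.commute)
    have "i + (n - e) = n + j"
      using \<open>i < n\<close> i Suc by simp
    then have "q ^ Suc j' * q ^ e = q ^ i" and "q ^ i * q ^ (n - e) = q ^ (n + j)"
      unfolding i power_add[symmetric] by simp_all
    then have coeff: "q ^ Suc j' * q ^ e * (1 + q ^ (n - e)) = q ^ (n + j) + q ^ i"
      by (simp add: algebra_simps)
    have "umbral_coeff q n (Suc i) j
        = (qchoose q i j' + q ^ Suc j' * qchoose q i (Suc j')) * (q ^ (e choose 2) * q ^ e)
          * ((1 + q ^ (n - e)) * P)"
      using Suc by (simp add: umbral_coeff_def qchoose_Suc_Suc[OF q] diffs choose_2_Suc power_add poch)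
    also have "\<dots> = umbral_coeff q n i j'
        + (q ^ Suc j' * q ^ e * (1 + q ^ (n - e))) * umbral_coeff q n i (Suc j')"
      by (simp add: umbral_coeff_def diffs choose_2_Suc power_add poch P_def algebra_simps)
    finally show ?thesis
      unfolding coeff using Suc by simp
  qed
qed

lemma coeff_qumbral_qfalling_qrising:
  assumes q: "q \<noteq> -1" and "i \<le> n"
  shows "coeff (qumbral q (qfalling_poly q n * qrising_poly q i)) m
       = (if n \<le> m then umbral_coeff q n i (m - n) else 0)"
  using \<open>i \<le> n\<close>
proof (induction i arbitrary: m)
  case 0
  then show ?case
    using q by (auto simp: qrising_poly_def qumbral_qfalling_poly coeff_monom umbral_coeff_def
        binomial_eq_0)
next
  case (Suc i)
  let ?c = "\<lambda>m. coeff (qumbral q (qfalling_poly q n * qrising_poly q i)) m"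
  have factor: "qfalling_poly q n * qrising_poly q (Suc i) = (qfalling_poly q n * qrising_poly q i) * [:q ^ i, 1:]"
    by (simp only: qrising_poly_def prod.lessThan_Suc mult.assoc)
  have "coeff (qumbral q (qfalling_poly q n * qrising_poly q (Suc i))) m
      = (case m of 0 \<Rightarrow> 0 | Suc k \<Rightarrow> ?c k) + (q ^ m + q ^ i) * ?c m"
    unfolding factor qumbral_mult_linear coeff_add coeff_smult coeff_qpascal_op by (simp add: algebra_simps)
  also have "\<dots> = (if n \<le> m then umbral_coeff q n (Suc i) (m - n) else 0)"
  proof (cases "n \<le> m")
    case True
    then obtain j where "m = n + j" using le_Suc_ex by blast
    then show ?thesis
      using Suc umbral_coeff_Suc[OF q, of i n j]
      by (cases j) (auto simp: algebra_simps split: nat.split)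
  next
    case False
    then show ?thesis using Suc by (auto split: nat.split)
  qed
  finally show ?case .
qed

section \<open>The generating series and its moments\<close>

definition qexp_add_neg :: "real \<Rightarrow> real fps" where
  "qexp_add_neg q = qexp q + qexp_neg q"

definition qexp_diff_neg :: "real \<Rightarrow> real fps" where
  "qexp_diff_neg q = qexp q - qexp_neg q"

lemma nth_qexp_add_neg: "qexp_add_neg q $ k = (if even k then 2 / qfact q k else 0)"
  by (simp add: qexp_add_neg_def qexp_def qexp_neg_def add_divide_distrib[symmetric])

lemma nth_qexp_diff_neg: "qexp_diff_neg q $ k = (if even k then 0 else 2 / qfact q k)"
  by (simp add: qexp_diff_neg_def qexp_def qexp_neg_def diff_divide_distrib[symmetric])

lemma qgen_series_mult_qexp_add_neg: "qgen_series q * qexp_add_neg q = fps_X * qexp_diff_neg q"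
proof -
  have unit: "qexp_add_neg q $ 0 \<noteq> 0" by (simp add: nth_qexp_add_neg)
  have "qgen_series q = fps_X * qexp_diff_neg q * inverse (qexp_add_neg q)"
    unfolding qgen_series_def qexp_add_neg_def[symmetric] qexp_diff_neg_def[symmetric]
    by (rule fps_divide_unit[OF unit])
  then show ?thesis
    by (simp add: mult.assoc inverse_mult_eq_1[OF unit])
qed

lemma qgen_series_convolution:
  "(\<Sum>i=0..m. qgen_series q $ i * qexp_add_neg q $ (m - i))
     = (if m = 0 then 0 else qexp_diff_neg q $ (m - 1))"
proof -
  have "(qgen_series q * qexp_add_neg q) $ m = (fps_X * qexp_diff_neg q) $ m"
    by (simp only: qgen_series_mult_qexp_add_neg)
  then show ?thesis
    unfolding fps_X_mult_nth unfolding fps_mult_nth .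
qed

lemma qgen_series_nth_0: "qgen_series q $ 0 = 0"
  using qgen_series_convolution[of q 0] by (simp add: nth_qexp_add_neg)

lemma qgen_series_odd_nth: "odd m \<Longrightarrow> qgen_series q $ m = 0"
proof (induction m rule: less_induct)
  case (less m)
  have "(\<Sum>i=0..m. qgen_series q $ i * qexp_add_neg q $ (m - i)) = 0"
    using qgen_series_convolution[of q m] less.prems by (simp add: nth_qexp_diff_neg)
  moreover have "qgen_series q $ i * qexp_add_neg q $ (m - i) = 0" if "i < m" for i
    using less.IH[OF that] less.prems that by (auto simp: nth_qexp_add_neg)
  moreover have "{0..m} = insert m {0..<m}" by auto
  ultimately have "qgen_series q $ m * qexp_add_neg q $ 0 = 0"
    by simp
  then show ?case by (simp add: nth_qexp_add_neg)
qed

definition qgen_moment :: "real \<Rightarrow> nat \<Rightarrow> real" where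
  "qgen_moment q l = qgen_series q $ l * qfact q l"

text \<open>Comparing coefficients of \<open>z\<^sup>m\<close> in \<open>G(z) (e(z) + e(-z)) = z (e(z) - e(-z))\<close>,
  with \<open>G\<close> even.\<close>

lemma sum_qchoose_qgen_moment:
  assumes q: "q \<noteq> -1" and "even m"
  shows "(\<Sum>l\<le>m. qchoose q m l * qgen_moment q l) = qint q m"
proof (cases "m = 0")
  case True
  then show ?thesis by (simp add: qgen_moment_def qgen_series_nth_0)
next
  case False
  let ?G = "qgen_series q"
  have "(\<Sum>l\<le>m. qchoose q m l * qgen_moment q l)
      = qfact q m / 2 * (\<Sum>l=0..m. ?G $ l * qexp_add_neg q $ (m - l))"
    unfolding atMost_atLeast0 sum_distrib_left
  proof (rule sum.cong)
    fix l assume "l \<in> {0..m}"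
    then have "l \<le> m" by simp
    moreover have "?G $ l = 0" if "odd l" using qgen_series_odd_nth that by blast
    ultimately show "qchoose q m l * qgen_moment q l = qfact q m / 2 * (?G $ l * qexp_add_neg q $ (m - l))"
      using qfact_nonzero[OF q, of l] \<open>even m\<close>
      by (auto simp: qchoose_def qbinom_def qgen_moment_def nth_qexp_add_neg)
  qed simp
  also have "\<dots> = qfact q m / qfact q (m - 1)"
    using qgen_series_convolution[of q m] False \<open>even m\<close> by (simp add: nth_qexp_diff_neg)
  also have "\<dots> = qint q m"
    using qfact_Suc[of q "m - 1"] qfact_nonzero[OF q, of "m - 1"] False by simp
  finally show ?thesis .
qed

definition even_poly :: "'a::zero poly \<Rightarrow> bool" where
  "even_poly f \<longleftrightarrow> (\<forall>i. odd i \<longrightarrow> coeff f i = 0)"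

lemma lin_functional_qgen_moment_qpascal_op_power:
  assumes q: "q \<noteq> -1" and "even m"
  shows "lin_functional (qgen_moment q) ((qpascal_op q ^^ m) 1) = qint q m"
proof -
  have "degree ((qpascal_op q ^^ m) 1) \<le> m"
    by (rule degree_le) (simp add: coeff_qpascal_op_power q)
  then show ?thesis
    using sum_qchoose_qgen_moment[OF assms]
    by (simp add: lin_functional_degree_le coeff_qpascal_op_power q)
qed

lemma lin_functional_qgen_moment_qumbral:
  assumes q: "q \<noteq> -1" and "even_poly f"
  shows "lin_functional (qgen_moment q) (qumbral q f) = lin_functional (qint q) f"
  unfolding qumbral_def lin_functional_sum[OF finite_atMost] lin_functional_smult
    lin_functional_def[of "qint q"]
  using \<open>even_poly f\<close>
  by (intro sum.cong refl) (metis even_poly_def lin_functional_qgen_moment_qpascal_op_power[OF q] mult_zero_left)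

definition qsquare_poly :: "real \<Rightarrow> nat \<Rightarrow> real poly" where
  "qsquare_poly q n = (\<Prod>k<n. [:- (q ^ (2 * k)), 0, 1:])"

lemma qsquare_poly_Suc:
  "qsquare_poly q (Suc n) = qsquare_poly q n * [:- (q ^ (2 * n)), 0, 1:]"
  by (simp add: qsquare_poly_def)

lemma mult_x2_minus_const: "(f :: 'a::comm_ring_1 poly) * [:- c, 0, 1:] = smult (- c) f + pCons 0 (pCons 0 f)"
  by (simp add: mult_pCons_right one_pCons[symmetric])

lemma qsquare_poly_eq: "qsquare_poly q n = qfalling_poly q n * qrising_poly q n"
  unfolding qsquare_poly_def qfalling_poly_def qrising_poly_def prod.distrib[symmetric]
  by (rule prod.cong) (simp_all add: power_mult power2_eq_square mult_ac)

lemma even_poly_qsquare_poly: "even_poly (qsquare_poly q n)"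
proof (induction n)
  case 0
  then show ?case by (simp add: qsquare_poly_def even_poly_def coeff_1 odd_pos)
next
  case (Suc n)
  then show ?case
    unfolding even_poly_def qsquare_poly_Suc mult_x2_minus_const
    by (auto simp: coeff_pCons elim!: oddE split: nat.split)
qed

lemma lin_functional_qint_mult_x2_minus_const:
  "lin_functional (qint q) (f * [:- c, 0, 1:]) = (q\<^sup>2 - c) * lin_functional (qint q) f + (1 + q) * poly f 1"
proof -
  have "qint q (Suc (Suc i)) = (1 + q) + q\<^sup>2 * qint q i" for i
    using qint_add[of q 2 i] by (simp add: qint_def numeral_2_eq_2)
  then have "lin_functional (qint q) (pCons 0 (pCons 0 f))
      = lin_functional (\<lambda>i. (1 + q) + q\<^sup>2 * qint q i) f"
    by (simp add: lin_functional_pCons_0)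
  also have "\<dots> = (1 + q) * poly f 1 + q\<^sup>2 * lin_functional (qint q) f"
    by (simp add: lin_functional_def poly_altdef sum_distrib_left sum.distrib algebra_simps)
  finally have shift: "lin_functional (qint q) (pCons 0 (pCons 0 f))
      = (1 + q) * poly f 1 + q\<^sup>2 * lin_functional (qint q) f" .
  show ?thesis
    unfolding mult_x2_minus_const lin_functional_add lin_functional_smult shift
    by (simp add: algebra_simps)
qed

lemma lin_functional_qint_qsquare_poly:
  "lin_functional (qint q) (qsquare_poly q n) = (if n = 1 then 1 + q else 0)"
proof (induction n)
  case 0
  then show ?case by (simp add: qsquare_poly_def lin_functional_def)
next
  case (Suc n)
  have "lin_functional (qint q) (qsquare_poly q (Suc n))
      = (q\<^sup>2 - q ^ (2 * n)) * lin_functional (qint q) (qsquare_poly q n)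
        + (1 + q) * poly (qsquare_poly q n) 1"
    by (simp only: qsquare_poly_Suc lin_functional_qint_mult_x2_minus_const)
  moreover have "poly (qsquare_poly q n) 1 = (if n = 0 then 1 else 0)"
    by (auto simp: qsquare_poly_def poly_prod intro!: prod_zero bexI[of _ 0])
  ultimately show ?case
    using Suc.IH by auto
qed

lemma sum_atMost_even_diff:
  fixes h :: "nat \<Rightarrow> 'a::comm_monoid_add"
  assumes "\<And>j. j \<le> n \<Longrightarrow> odd (n - j) \<Longrightarrow> h j = 0"
  shows "(\<Sum>j\<le>n. h j) = (\<Sum>k=0..n div 2. h (n - 2 * k))"
proof -
  have "(\<Sum>j\<le>n. h j) = (\<Sum>j\<in>{j. j \<le> n \<and> even (n - j)}. h j)"
    by (rule sum.mono_neutral_right) (use assms in auto)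
  also have "\<dots> = (\<Sum>k=0..n div 2. h (n - 2 * k))"
    by (rule sum.reindex_bij_witness[where j="\<lambda>j. (n - j) div 2" and i="\<lambda>k. n - 2 * k"])
      (auto elim!: evenE intro: div_le_mono)
  finally show ?thesis .
qed

lemma lin_functional_qgen_moment_qumbral_qsquare_poly:
  assumes q: "q \<noteq> -1"
  shows "lin_functional (qgen_moment q) (qumbral q (qsquare_poly q n))
       = (\<Sum>k=0..n div 2. umbral_coeff q n n (n - 2 * k) * qgen_moment q (2 * (n - k)))"
proof -
  let ?P = "qumbral q (qsquare_poly q n)"
  have coeff_P: "coeff ?P m = (if n \<le> m then umbral_coeff q n n (m - n) else 0)" for m
    unfolding qsquare_poly_eq by (rule coeff_qumbral_qfalling_qrising[OF q order.refl])
  have "degree ?P \<le> n + n"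
    by (rule degree_le) (simp add: coeff_P umbral_coeff_def)
  then have "lin_functional (qgen_moment q) ?P = (\<Sum>m\<le>n + n. coeff ?P m * qgen_moment q m)"
    by (rule lin_functional_degree_le)
  also have "\<dots> = (\<Sum>m=n..n + n. coeff ?P m * qgen_moment q m)"
    by (rule sum.mono_neutral_right) (auto simp: coeff_P)
  also have "\<dots> = (\<Sum>j\<le>n. umbral_coeff q n n j * qgen_moment q (n + j))"
    by (subst sum.atLeastAtMost_shift_0) (simp_all add: coeff_P atMost_atLeast0)
  also have "\<dots> = (\<Sum>k=0..n div 2. umbral_coeff q n n (n - 2 * k) * qgen_moment q (n + (n - 2 * k)))"
    by (rule sum_atMost_even_diff) (simp add: qgen_moment_def qgen_series_odd_nth)
  also have "\<dots> = (\<Sum>k=0..n div 2. umbral_coeff q n n (n - 2 * k) * qgen_moment q (2 * (n - k)))"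
    by (rule sum.cong) (auto simp: mult_2 intro!: arg_cong[where f="qgen_moment q"])
  finally show ?thesis .
qed

lemma seidel_summand_eq:
  assumes q: "q \<noteq> -1" and "n \<ge> 1" and "k \<le> n div 2"
  shows "q ^ ((2 * k) choose 2) * qbinom q n (2 * k) * (-1) ^ k
            * qpoch (- (q ^ (n - 2 * k + 1))) q (2 * k)
            / qpoch (- (q ^ (2 * n - 2 * k))) q (2 * k)
            * qGenocchi q (n - k)
       = (-1) ^ (n - 1) / qpoch (- q) q (2 * n - 1)
            * (umbral_coeff q n n (n - 2 * k) * qgen_moment q (2 * (n - k)))"
proof -
  have "2 * k \<le> n" and "k < n"
    using assms(2,3) by linarith+
  define R where "R = qpoch (- (q ^ (2 * n - 2 * k))) q (2 * k)"
  define S where "S = qpoch (- q) q (2 * (n - k) - 1)"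
  have coeff: "umbral_coeff q n n (n - 2 * k)
      = qbinom q n (2 * k) * q ^ ((2 * k) choose 2) * qpoch (- (q ^ (n - 2 * k + 1))) q (2 * k)"
    using \<open>2 * k \<le> n\<close> by (simp add: umbral_coeff_def qchoose_symmetric Suc_diff_le)
  have genocchi: "qGenocchi q (n - k) = qgen_moment q (2 * (n - k)) * (-1) ^ (n - k - 1) / S"
    by (simp add: qGenocchi_def qgen_moment_def S_def)
  have "2 * n - 1 = (2 * (n - k) - 1) + 2 * k" and "q * q ^ (2 * (n - k) - 1) = q ^ (2 * n - 2 * k)"
    using \<open>k < n\<close> by (simp_all add: power_Suc[symmetric] Suc_diff_Suc right_diff_distrib')
  then have poch: "qpoch (- q) q (2 * n - 1) = S * R"
    by (simp only: qpoch_add S_def R_def) simp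
  have sign: "(-1::real) ^ (n - 1) = (-1) ^ k * (-1) ^ (n - k - 1)"
    using \<open>k < n\<close> by (simp add: power_add[symmetric])
  have "R \<noteq> 0" "S \<noteq> 0"
    using qpoch_neg_power_nonzero[OF q, of 1] qpoch_neg_power_nonzero[OF q]
    by (simp_all add: R_def S_def)
  then show ?thesis
    unfolding coeff genocchi poch sign R_def[symmetric] by (simp add: field_simps)
qed

theorem theorem3p5:
  fixes q :: real and n :: nat
  assumes "q \<noteq> -1" and "n \<ge> 1"
  shows "(\<Sum>k = 0..n div 2.
            q ^ ((2 * k) choose 2) * qbinom q n (2 * k) * (-1) ^ k
            * qpoch (- (q ^ (n - 2 * k + 1))) q (2 * k)
            / qpoch (- (q ^ (2 * n - 2 * k))) q (2 * k)
            * qGenocchi q (n - k))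
         = (if n = 1 then 1 else 0)"
proof -
  let ?c = "(-1) ^ (n - 1) / qpoch (- q) q (2 * n - 1)"
  have "(\<Sum>k = 0..n div 2.
            q ^ ((2 * k) choose 2) * qbinom q n (2 * k) * (-1) ^ k
            * qpoch (- (q ^ (n - 2 * k + 1))) q (2 * k)
            / qpoch (- (q ^ (2 * n - 2 * k))) q (2 * k)
            * qGenocchi q (n - k))
      = (\<Sum>k = 0..n div 2. ?c * (umbral_coeff q n n (n - 2 * k) * qgen_moment q (2 * (n - k))))"
    using assms by (intro sum.cong refl seidel_summand_eq) auto
  also have "\<dots> = ?c * lin_functional (qgen_moment q) (qumbral q (qsquare_poly q n))"
    by (simp add: lin_functional_qgen_moment_qumbral_qsquare_poly[OF assms(1)] sum_distrib_left)
  also have "\<dots> = ?c * (if n = 1 then 1 + q else 0)"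
    using assms(1)
    by (simp add: lin_functional_qgen_moment_qumbral even_poly_qsquare_poly
        lin_functional_qint_qsquare_poly)
  also have "\<dots> = (if n = 1 then 1 else 0)"
    using one_plus_power_nonzero[OF assms(1), of 1] by (simp add: qpoch_def)
  finally show ?thesis .
qed

end
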